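(* Let $(\mathsf K,\mathsf D)$ be a differential ring, $n\ge 2$, and $L=\sum_{i=0}^n\binom{n}{i}a_i\mathsf D^{n-i}\in\mathsf K\langle\mathsf D\rangle$ with $a_0=1$. For $f\in\mathsf K^\times$ let $L^f:=f^{-1}Lf$, which is again of the form $\sum_{i=0}^n\binom{n}{i}\tilde a_i\mathsf D^{n-i}$ with $\tilde a_0=1$. Then for every $k=2,\dots,n$, $$I_k(L^f)=f^{-1}I_k(L)f,$$ where $I_k(M)$ denotes the $k$-th gauge–Wilczynski covariant of an operator $M$.
   Context: A differential ring is a unital associative (not necessarily commutative) ring $\mathsf K$ with a derivation $\mathsf D$ (additive, $\mathsf D(ab)=\mathsf D(a)b+a\mathsf D(b)$). $\mathsf K\langle\mathsf D\rangle$ is the Ore algebra with coefficients on the left and relation $\mathsf D a=a\mathsf D+\mathsf D(a)$. For a monic binomially normalized operator $M=\sum_{i=0}^n\binom ni b_i\mathsf D^{n-i}$ ($b_0=1$), the gauge–Wilczynski covariants $I_2(M),\dots,I_n(M)\in\mathsf K$ are the unique elements with $M=\nabla^n+\sum_{k=2}^n\binom nk I_k(M)\nabla^{n-k}$, where $\nabla=\mathsf D+b_1$.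
   Formalization: The decomposition of L defining $I_2(L),\dots,I_n(L)$ must exist and be unique, and the coefficients of $L^f$ are taken as $\tilde a_m=\sum_{i=0}^m\binom{m}{i}f^{-1}a_i\mathsf D^{m-i}(f)$. Each condition added here is assumed in the paper as well or is needed for the statement above to hold. *)

theory Defs
  imports Main
begin

definition diffring :: "('a::ring_1 \<Rightarrow> 'a) \<Rightarrow> bool" where
  "diffring D \<longleftrightarrow> (\<forall>x y. D (x + y) = D x + D y) \<and> (\<forall>x y. D (x * y) = D x * y + x * D y)"

text \<open>Elements of the Ore algebra K<D> are represented by their (finitely supported)
  coefficient functions: p represents  sum_i (p i) D^i  (coefficients on the left).\<close>

definition opconst :: "'a::ring_1 \<Rightarrow> (nat \<Rightarrow> 'a)" where
  "opconst c = (\<lambda>i. if i = 0 then c else 0)"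

definition opD :: "nat \<Rightarrow> 'a::ring_1" where
  "opD = (\<lambda>i. if i = 1 then 1 else 0)"

definition opadd :: "(nat \<Rightarrow> 'a::ring_1) \<Rightarrow> (nat \<Rightarrow> 'a) \<Rightarrow> (nat \<Rightarrow> 'a)" where
  "opadd p q = (\<lambda>i. p i + q i)"

text \<open>Product in K<D>, from  (a D^i)(b D^j) = sum_l binom(i,l) a D^l(b) D^(i-l+j).\<close>
definition opmul :: "('a::ring_1 \<Rightarrow> 'a) \<Rightarrow> (nat \<Rightarrow> 'a) \<Rightarrow> (nat \<Rightarrow> 'a) \<Rightarrow> (nat \<Rightarrow> 'a)" where
  "opmul D p q = (\<lambda>m. \<Sum>i\<in>{i. p i \<noteq> 0}. \<Sum>j\<in>{j. q j \<noteq> 0}. \<Sum>l\<in>{..i}.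
      (if i - l + j = m then p i * of_nat (i choose l) * (D ^^ l) (q j) else 0))"

fun oppow :: "('a::ring_1 \<Rightarrow> 'a) \<Rightarrow> (nat \<Rightarrow> 'a) \<Rightarrow> nat \<Rightarrow> (nat \<Rightarrow> 'a)" where
  "oppow D p 0 = opconst 1"
| "oppow D p (Suc m) = opmul D p (oppow D p m)"

text \<open>Binomially normalized operator  sum_{i=0}^n binom(n,i) b_i D^(n-i).\<close>
definition normop :: "nat \<Rightarrow> (nat \<Rightarrow> 'a::ring_1) \<Rightarrow> (nat \<Rightarrow> 'a)" where
  "normop n b = (\<lambda>j. if j \<le> n then of_nat (n choose (n - j)) * b (n - j) else 0)"

definition nabla :: "(nat \<Rightarrow> 'a::ring_1) \<Rightarrow> (nat \<Rightarrow> 'a)" where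
  "nabla b = opadd opD (opconst (b 1))"

definition gw_decomp :: "('a::ring_1 \<Rightarrow> 'a) \<Rightarrow> nat \<Rightarrow> (nat \<Rightarrow> 'a) \<Rightarrow> (nat \<Rightarrow> 'a) \<Rightarrow> bool" where
  "gw_decomp D n b I \<longleftrightarrow>
     normop n b = (\<lambda>j. oppow D (nabla b) n j +
        (\<Sum>k\<in>{2..n}. opmul D (opconst (of_nat (n choose k) * I k)) (oppow D (nabla b) (n - k)) j))"

definition gw_welldef :: "('a::ring_1 \<Rightarrow> 'a) \<Rightarrow> nat \<Rightarrow> (nat \<Rightarrow> 'a) \<Rightarrow> bool" where
  "gw_welldef D n b \<longleftrightarrow> (\<exists>I. gw_decomp D n b I) \<and>
     (\<forall>I J. gw_decomp D n b I \<longrightarrow> gw_decomp D n b J \<longrightarrow> (\<forall>k\<in>{2..n}. I k = J k))"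

definition gwI :: "('a::ring_1 \<Rightarrow> 'a) \<Rightarrow> nat \<Rightarrow> (nat \<Rightarrow> 'a) \<Rightarrow> nat \<Rightarrow> 'a" where
  "gwI D n b k = (THE c. \<exists>I. gw_decomp D n b I \<and> I k = c)"

text \<open>Coefficients of the gauge transform f^{-1} L f (g = f^{-1}):
  a~_m = sum_{i=0}^m binom(m,i) f^{-1} a_i D^(m-i)(f).\<close>
definition gauge_coeffs :: "('a::ring_1 \<Rightarrow> 'a) \<Rightarrow> (nat \<Rightarrow> 'a) \<Rightarrow> 'a \<Rightarrow> 'a \<Rightarrow> (nat \<Rightarrow> 'a)" where
  "gauge_coeffs D a f g = (\<lambda>m. \<Sum>i\<le>m. of_nat (m choose i) * g * a i * (D ^^ (m - i)) f)"

end

theory Submission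
  imports Defs
begin

text \<open>Conjugation \<open>X \<mapsto> g X f\<close> by a unit \<open>f\<close> of \<open>K\<close> with inverse \<open>g\<close> is an automorphism
  of \<open>K\<langle>D\<rangle>\<close>: it is multiplicative by associativity of \<open>K\<langle>D\<rangle>\<close> and sends a constant \<open>c\<close>
  to \<open>g c f\<close>. By the Leibniz rule it maps \<open>L\<close> to \<open>L\<^sup>f\<close> and \<open>\<nabla> = D + a\<^sub>1\<close> to
  \<open>D + g a\<^sub>1 f + g D(f)\<close>, which is the \<open>\<nabla>\<close> of \<open>L\<^sup>f\<close>. So it carries the decomposition
  \<open>L = \<nabla>\<^sup>n + \<Sum> (n choose k) I\<^sub>k \<nabla>\<^sup>n\<^sup>-\<^sup>k\<close> to a decomposition of \<open>L\<^sup>f\<close> with coefficients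
  \<open>g I\<^sub>k f\<close>, and the inverse conjugation \<open>X \<mapsto> f X g\<close> transports uniqueness of the
  covariants from \<open>L\<close> to \<open>L\<^sup>f\<close>.\<close>

text \<open>\<^const>\<open>opmul\<close> sums over supports, so it is only the product of \<open>K\<langle>D\<rangle>\<close> on finitely
  supported coefficient functions; hence the degree bounds below.\<close>
definition deg_le :: "(nat \<Rightarrow> 'a::zero) \<Rightarrow> nat \<Rightarrow> bool" where
  "deg_le p N \<longleftrightarrow> (\<forall>i>N. p i = 0)"

lemma deg_le_mono: "deg_le p N \<Longrightarrow> N \<le> N' \<Longrightarrow> deg_le p N'"
  by (simp add: deg_le_def)

lemma finite_support_if_deg_le: "deg_le p N \<Longrightarrow> finite {i. p i \<noteq> 0}"
  unfolding deg_le_def by (rule finite_subset[of _ "{..N}"]) (auto simp: not_less[symmetric])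

lemma deg_le_scale: "deg_le p N \<Longrightarrow> deg_le (\<lambda>i. (c::'a::mult_zero) * p i) N"
  by (simp add: deg_le_def)

lemma deg_le_opconst: "deg_le (opconst c) 0"
  by (simp add: deg_le_def opconst_def)

lemma deg_le_normop: "deg_le (normop n b) n"
  by (simp add: deg_le_def normop_def)

lemma deg_le_nabla: "deg_le (nabla b) 1"
  by (simp add: deg_le_def nabla_def opadd_def opD_def opconst_def)

lemma mult_of_nat_mult_of_nat:
  fixes x y z :: "'a::ring_1"
  shows "x * (of_nat p * y) * (of_nat q * z) = of_nat (p * q) * (x * y * z)"
proof -
  have "x * (of_nat p * y) * (of_nat q * z) = x * of_nat p * y * of_nat q * z"
    by (simp add: mult.assoc)
  also have "\<dots> = of_nat p * x * y * of_nat q * z"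
    by (simp add: mult_of_nat_commute)
  also have "\<dots> = of_nat p * (x * y * of_nat q) * z"
    by (simp add: mult.assoc)
  also have "x * y * of_nat q = of_nat q * (x * y)"
    by (simp add: mult_of_nat_commute)
  finally show ?thesis
    by (simp add: mult.assoc)
qed

lemma choose_mult_choose_diff:
  "m + j \<le> n \<Longrightarrow> (n choose j) * (n - j choose m) = (n choose (n - m)) * (n - m choose j)"
  using choose_mult[of j "n - m" n] binomial_symmetric[of m "n - j"] by (simp add: add.commute)

locale differential_ring =
  fixes D :: "'a::ring_1 \<Rightarrow> 'a"
  assumes diffring: "diffring D"
begin

lemma D_add: "D (x + y) = D x + D y"
  using diffring by (simp add: diffring_def)

lemma D_mult: "D (x * y) = D x * y + x * D y"
  using diffring by (simp add: diffring_def)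

lemma D_0 [simp]: "D 0 = 0"
  using D_add[of 0 0] by simp

lemma D_1 [simp]: "D 1 = 0"
  using D_mult[of 1 1] by simp

lemma D_sum: "D (sum h S) = (\<Sum>x\<in>S. D (h x))"
  by (induction S rule: infinite_finite_induct) (simp_all add: D_add)

lemma D_of_nat_mult: "D (of_nat k * x) = of_nat k * D x"
  by (induction k) (simp_all add: D_add distrib_right)

lemma funpow_D_1: "0 < l \<Longrightarrow> (D ^^ l) 1 = 0"
proof (induction l)
  case (Suc l)
  then show ?case
    by (cases l) auto
qed simp

text \<open>Left multiplication by \<open>D\<close> in \<open>K\<langle>D\<rangle>\<close>: \<open>D q\<^sub>i D\<^sup>i = D(q\<^sub>i) D\<^sup>i + q\<^sub>i D\<^sup>i\<^sup>+\<^sup>1\<close>.\<close>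
definition Dmul :: "(nat \<Rightarrow> 'a) \<Rightarrow> nat \<Rightarrow> 'a" where
  "Dmul q i = D (q i) + (if i = 0 then 0 else q (i - 1))"

lemma funpow_Dmul_Suc:
  "(Dmul ^^ Suc i) q m = D ((Dmul ^^ i) q m) + (if m = 0 then 0 else (Dmul ^^ i) q (m - 1))"
  by (simp add: Dmul_def)

lemma deg_le_Dmul: "deg_le q M \<Longrightarrow> deg_le (Dmul q) (Suc M)"
  by (simp add: deg_le_def Dmul_def)

lemma deg_le_funpow_Dmul: "deg_le q M \<Longrightarrow> deg_le ((Dmul ^^ i) q) (M + i)"
  by (induction i) (simp_all add: deg_le_Dmul)

lemma Leibniz_sum_Suc:
  "(\<Sum>l\<le>Suc i. if Suc i - l + j = m then of_nat (Suc i choose l) * (D ^^ l) x else 0)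
   = (\<Sum>l\<le>i. if i - l + j = m then of_nat (i choose l) * (D ^^ Suc l) x else 0)
     + (if m = 0 then 0 else \<Sum>l\<le>i. if i - l + j = m - 1 then of_nat (i choose l) * (D ^^ l) x else 0)"
proof -
  define A where "A l = (if Suc i - l + j = m then of_nat (i choose l) * (D ^^ l) x else 0)" for l
  define B where
    "B l = (if Suc i - l + j = m \<and> l \<noteq> 0 then of_nat (i choose (l - 1)) * (D ^^ l) x else 0)" for l
  have Pascal: "Suc i choose l = (i choose l) + (if l = 0 then 0 else i choose (l - 1))" for l
    by (cases l) auto
  have "(\<Sum>l\<le>Suc i. if Suc i - l + j = m then of_nat (Suc i choose l) * (D ^^ l) x else 0)
      = (\<Sum>l\<le>Suc i. A l + B l)"
    by (rule sum.cong) (auto simp: A_def B_def Pascal distrib_right)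
  also have "\<dots> = sum A {..Suc i} + sum B {..Suc i}"
    by (simp add: sum.distrib)
  also have "sum A {..Suc i} = sum A {..i}"
    by (simp add: A_def binomial_eq_0)
  also have "\<dots> = (if m = 0 then 0
      else \<Sum>l\<le>i. if i - l + j = m - 1 then of_nat (i choose l) * (D ^^ l) x else 0)"
    by (auto simp: A_def intro!: sum.cong)
  also have "sum B {..Suc i}
      = (\<Sum>l\<le>i. if i - l + j = m then of_nat (i choose l) * (D ^^ Suc l) x else 0)"
    by (subst sum.atMost_Suc_shift) (simp add: B_def cong: if_cong del: funpow.simps)
  finally show ?thesis
    by (simp add: add.commute)
qed

text \<open>Leibniz rule \<open>D\<^sup>i c = \<Sum> (i choose l) D\<^sup>l(c) D\<^sup>i\<^sup>-\<^sup>l\<close> in \<open>K\<langle>D\<rangle>\<close>.\<close>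
lemma funpow_Dmul_eq_sum:
  assumes "finite S" and "\<And>j. j \<notin> S \<Longrightarrow> q j = 0"
  shows "(Dmul ^^ i) q m
    = (\<Sum>j\<in>S. \<Sum>l\<le>i. if i - l + j = m then of_nat (i choose l) * (D ^^ l) (q j) else 0)"
proof (induction i arbitrary: m)
  case 0
  have "(\<Sum>j\<in>S. \<Sum>l\<le>0. if 0 - l + j = m then of_nat (0 choose l) * (D ^^ l) (q j) else 0)
      = (\<Sum>j\<in>S. if j = m then q j else 0)"
    by (intro sum.cong) auto
  also have "\<dots> = q m"
    using assms by (simp add: sum.delta')
  finally show ?case
    by simp
next
  case (Suc i)
  have "(\<Sum>j\<in>S. \<Sum>l\<le>Suc i. if Suc i - l + j = m then of_nat (Suc i choose l) * (D ^^ l) (q j) else 0)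
     = (\<Sum>j\<in>S. (\<Sum>l\<le>i. if i - l + j = m then of_nat (i choose l) * (D ^^ Suc l) (q j) else 0)
     + (if m = 0 then 0
        else \<Sum>l\<le>i. if i - l + j = m - 1 then of_nat (i choose l) * (D ^^ l) (q j) else 0))"
    by (rule sum.cong[OF refl Leibniz_sum_Suc])
  also have "\<dots> = (\<Sum>j\<in>S. \<Sum>l\<le>i. if i - l + j = m then of_nat (i choose l) * (D ^^ Suc l) (q j) else 0)
     + (if m = 0 then 0
        else \<Sum>j\<in>S. \<Sum>l\<le>i. if i - l + j = m - 1 then of_nat (i choose l) * (D ^^ l) (q j) else 0)"
    by (simp add: sum.distrib)
  also have "(\<Sum>j\<in>S. \<Sum>l\<le>i. if i - l + j = m then of_nat (i choose l) * (D ^^ Suc l) (q j) else 0)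
     = D (\<Sum>j\<in>S. \<Sum>l\<le>i. if i - l + j = m then of_nat (i choose l) * (D ^^ l) (q j) else 0)"
    by (simp add: D_sum D_of_nat_mult if_distrib[of D] cong: if_cong)
  finally show ?case
    by (simp only: Suc.IH funpow_Dmul_Suc)
qed

lemma opmul_eq_sum_funpow_Dmul:
  assumes "deg_le p N" and "deg_le q M"
  shows "opmul D p q m = (\<Sum>i\<le>N. p i * (Dmul ^^ i) q m)"
proof -
  let ?S = "{j. q j \<noteq> 0}"
  have "opmul D p q m = (\<Sum>i\<in>{i. p i \<noteq> 0}. p i * (\<Sum>j\<in>?S. \<Sum>l\<le>i.
      if i - l + j = m then of_nat (i choose l) * (D ^^ l) (q j) else 0))"
    unfolding opmul_def by (simp add: sum_distrib_left mult.assoc if_distrib cong: if_cong)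
  also have "\<dots> = (\<Sum>i\<in>{i. p i \<noteq> 0}. p i * (Dmul ^^ i) q m)"
    using funpow_Dmul_eq_sum[OF finite_support_if_deg_le[OF assms(2)]] by simp
  also have "\<dots> = (\<Sum>i\<le>N. p i * (Dmul ^^ i) q m)"
    using assms(1) unfolding deg_le_def
    by (intro sum.mono_neutral_left) (auto simp: not_less[symmetric])
  finally show ?thesis .
qed

lemma deg_le_opmul:
  assumes "deg_le p N" and "deg_le q M"
  shows "deg_le (opmul D p q) (N + M)"
  unfolding deg_le_def
proof (intro allI impI)
  fix m
  assume "N + M < m"
  then have "(Dmul ^^ i) q m = 0" if "i \<le> N" for i
    using deg_le_funpow_Dmul[OF assms(2), of i] that unfolding deg_le_def by auto
  then show "opmul D p q m = 0"
    by (simp add: opmul_eq_sum_funpow_Dmul[OF assms])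
qed

lemma deg_le_oppow: "deg_le p N \<Longrightarrow> deg_le (oppow D p k) (N * k)"
  by (induction k) (simp_all add: deg_le_opconst deg_le_opmul)

lemma opmul_Dmul_left:
  assumes X: "deg_le X B" and r: "deg_le r R"
  shows "opmul D (Dmul X) r = Dmul (opmul D X r)"
proof
  fix m
  define W where "W k = (Dmul ^^ k) r" for k
  have "opmul D (Dmul X) r m = (\<Sum>k\<le>Suc B. Dmul X k * W k m)"
    using opmul_eq_sum_funpow_Dmul[OF deg_le_Dmul[OF X] r] by (simp add: W_def)
  also have "\<dots> = (\<Sum>k\<le>Suc B. D (X k) * W k m)
      + (\<Sum>k\<le>Suc B. (if k = 0 then 0 else X (k - 1)) * W k m)"
    by (simp add: Dmul_def distrib_right sum.distrib)
  also have "(\<Sum>k\<le>Suc B. D (X k) * W k m) = (\<Sum>k\<le>B. D (X k) * W k m)"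
    using X by (simp add: deg_le_def)
  also have "(\<Sum>k\<le>Suc B. (if k = 0 then 0 else X (k - 1)) * W k m) = (\<Sum>k\<le>B. X k * W (Suc k) m)"
    by (subst sum.atMost_Suc_shift) simp
  also have "\<dots> = (\<Sum>k\<le>B. X k * D (W k m)) + (if m = 0 then 0 else \<Sum>k\<le>B. X k * W k (m - 1))"
    by (simp add: W_def funpow_Dmul_Suc distrib_left sum.distrib del: funpow.simps)
  also have "(\<Sum>k\<le>B. D (X k) * W k m) + ((\<Sum>k\<le>B. X k * D (W k m))
      + (if m = 0 then 0 else \<Sum>k\<le>B. X k * W k (m - 1)))
    = D (\<Sum>k\<le>B. X k * W k m) + (if m = 0 then 0 else \<Sum>k\<le>B. X k * W k (m - 1))"
    by (simp add: D_sum D_mult sum.distrib add.assoc)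
  also have "\<dots> = Dmul (opmul D X r) m"
    by (simp add: Dmul_def opmul_eq_sum_funpow_Dmul[OF X r] W_def)
  finally show "opmul D (Dmul X) r m = Dmul (opmul D X r) m" .
qed

lemma opmul_funpow_Dmul_left:
  assumes "deg_le q M" and "deg_le r R"
  shows "opmul D ((Dmul ^^ i) q) r = (Dmul ^^ i) (opmul D q r)"
  by (induction i) (simp_all add: opmul_Dmul_left[OF deg_le_funpow_Dmul[OF assms(1)] assms(2)])

lemma opmul_assoc:
  assumes p: "deg_le p N" and q: "deg_le q M" and r: "deg_le r R"
  shows "opmul D (opmul D p q) r = opmul D p (opmul D q r)"
proof
  fix m
  define W where "W k = (Dmul ^^ k) r" for k
  have "opmul D (opmul D p q) r m = (\<Sum>k\<le>N + M. (\<Sum>i\<le>N. p i * (Dmul ^^ i) q k) * W k m)"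
    by (simp add: opmul_eq_sum_funpow_Dmul[OF deg_le_opmul[OF p q] r]
        opmul_eq_sum_funpow_Dmul[OF p q] W_def)
  also have "\<dots> = (\<Sum>i\<le>N. p i * (\<Sum>k\<le>N + M. (Dmul ^^ i) q k * W k m))"
    by (simp add: sum_distrib_right sum_distrib_left mult.assoc sum.swap[of _ "{..N + M}"])
  also have "\<dots> = (\<Sum>i\<le>N. p i * opmul D ((Dmul ^^ i) q) r m)"
  proof (rule sum.cong[OF refl])
    fix i
    assume "i \<in> {..N}"
    then have "deg_le ((Dmul ^^ i) q) (N + M)"
      using deg_le_mono[OF deg_le_funpow_Dmul[OF q, of i]] by auto
    then show "p i * (\<Sum>k\<le>N + M. (Dmul ^^ i) q k * W k m) = p i * opmul D ((Dmul ^^ i) q) r m"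
      by (simp add: opmul_eq_sum_funpow_Dmul[OF _ r] W_def)
  qed
  also have "\<dots> = opmul D p (opmul D q r) m"
    by (simp add: opmul_funpow_Dmul_left[OF q r] opmul_eq_sum_funpow_Dmul[OF p deg_le_opmul[OF q r]])
  finally show "opmul D (opmul D p q) r m = opmul D p (opmul D q r) m" .
qed

lemma funpow_Dmul_opconst:
  "(Dmul ^^ i) (opconst c) m = (if m \<le> i then of_nat (i choose m) * (D ^^ (i - m)) c else 0)"
proof (induction i arbitrary: m)
  case 0
  then show ?case
    by (simp add: opconst_def)
next
  case (Suc i)
  show ?case
  proof (cases m)
    case 0
    then show ?thesis
      unfolding funpow_Dmul_Suc using Suc.IH[of 0] by simp
  next
    case (Suc m')
    then have step: "(Dmul ^^ Suc i) (opconst c) m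
        = D ((Dmul ^^ i) (opconst c) (Suc m')) + (Dmul ^^ i) (opconst c) m'"
      by (simp add: funpow_Dmul_Suc del: funpow.simps)
    show ?thesis
    proof (cases "m' < i")
      case True
      then have "i - m' = Suc (i - Suc m')"
        by simp
      then show ?thesis
        using True unfolding step Suc.IH
        by (simp add: Suc D_of_nat_mult distrib_right)
    next
      case False
      then show ?thesis
        unfolding step Suc.IH by (cases "m' = i") (auto simp: Suc)
    qed
  qed
qed

lemma opmul_opconst_left:
  assumes "deg_le Z M"
  shows "opmul D (opconst c) Z = (\<lambda>m. c * Z m)"
  by (rule ext) (subst opmul_eq_sum_funpow_Dmul[OF deg_le_opconst assms], simp add: opconst_def)

lemma opmul_opconst_opconst: "opmul D (opconst c) (opconst c') = opconst (c * c')"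
  by (subst opmul_opconst_left[OF deg_le_opconst]) (auto simp: opconst_def)

lemma opmul_opconst_1_right:
  assumes "deg_le Z N"
  shows "opmul D Z (opconst 1) = Z"
proof
  fix m
  have "opmul D Z (opconst 1) m
      = (\<Sum>i\<le>N. Z i * (if m \<le> i then of_nat (i choose m) * (D ^^ (i - m)) 1 else 0))"
    by (simp add: opmul_eq_sum_funpow_Dmul[OF assms deg_le_opconst] funpow_Dmul_opconst)
  also have "\<dots> = (\<Sum>i\<le>N. if i = m then Z i else 0)"
    by (rule sum.cong) (auto simp: funpow_D_1)
  also have "\<dots> = Z m"
    using assms by (auto simp: deg_le_def)
  finally show "opmul D Z (opconst 1) m = Z m" .
qed

lemma opmul_opconst_cancel:
  assumes "v * u = 1" and "deg_le X N"
  shows "opmul D (opconst v) (opmul D (opconst u) X) = X"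
  by (simp add: opmul_opconst_left[OF assms(2)] opmul_opconst_left[OF deg_le_scale[OF assms(2)]]
      mult.assoc[symmetric] assms(1))

definition gauge :: "'a \<Rightarrow> 'a \<Rightarrow> (nat \<Rightarrow> 'a) \<Rightarrow> nat \<Rightarrow> 'a" where
  "gauge u v X = opmul D (opmul D (opconst u) X) (opconst v)"

lemma gauge_eq_sum:
  assumes "deg_le X N"
  shows "gauge u v X m
    = (\<Sum>i\<le>N. u * X i * (if m \<le> i then of_nat (i choose m) * (D ^^ (i - m)) v else 0))"
  unfolding gauge_def opmul_opconst_left[OF assms]
    opmul_eq_sum_funpow_Dmul[OF deg_le_scale[OF assms] deg_le_opconst] funpow_Dmul_opconst ..

lemma gauge_add_sum:
  assumes X: "deg_le X N" and "finite K" and Y: "\<And>k. k \<in> K \<Longrightarrow> deg_le (Y k) N"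
  shows "gauge u v (\<lambda>j. X j + (\<Sum>k\<in>K. Y k j)) = (\<lambda>j. gauge u v X j + (\<Sum>k\<in>K. gauge u v (Y k) j))"
proof -
  have XY: "deg_le (\<lambda>j. X j + (\<Sum>k\<in>K. Y k j)) N"
    using X Y by (simp add: deg_le_def)
  have "gauge u v (Y k) m
      = (\<Sum>i\<le>N. u * Y k i * (if m \<le> i then of_nat (i choose m) * (D ^^ (i - m)) v else 0))"
    if "k \<in> K" for k m
    using gauge_eq_sum[OF Y[OF that]] .
  then show ?thesis
    by (intro ext) (simp add: gauge_eq_sum[OF XY] gauge_eq_sum[OF X] distrib_left distrib_right
        sum.distrib sum_distrib_left sum_distrib_right sum.swap[of _ K])
qed

lemma gauge_opconst: "gauge u v (opconst c) = opconst (u * c * v)"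
  by (simp add: gauge_def opmul_opconst_opconst)

lemma gauge_opmul:
  assumes vu: "v * u = 1" and X: "deg_le X N" and Y: "deg_le Y M"
  shows "gauge u v (opmul D X Y) = opmul D (gauge u v X) (gauge u v Y)"
proof -
  let ?u = "opconst u" and ?v = "opconst v"
  have uX: "deg_le (opmul D ?u X) N" and uY: "deg_le (opmul D ?u Y) M"
    using deg_le_opmul[OF deg_le_opconst X] deg_le_opmul[OF deg_le_opconst Y] by simp_all
  have "opmul D ?v (gauge u v Y) = opmul D Y ?v"
    unfolding gauge_def
    by (simp add: opmul_assoc[OF deg_le_opconst uY deg_le_opconst, symmetric]
        opmul_opconst_cancel[OF vu Y])
  then have "opmul D (gauge u v X) (gauge u v Y) = opmul D (opmul D ?u X) (opmul D Y ?v)"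
    unfolding gauge_def
    by (simp add: opmul_assoc[OF uX deg_le_opconst deg_le_opmul[OF uY deg_le_opconst]])
  also have "\<dots> = opmul D (opmul D (opmul D ?u X) Y) ?v"
    by (rule opmul_assoc[OF uX Y deg_le_opconst, symmetric])
  also have "\<dots> = gauge u v (opmul D X Y)"
    unfolding gauge_def by (simp add: opmul_assoc[OF deg_le_opconst X Y])
  finally show ?thesis ..
qed

lemma gauge_gauge:
  assumes vu: "v * u = 1" and X: "deg_le X N"
  shows "gauge v u (gauge u v X) = X"
proof -
  let ?u = "opconst u" and ?v = "opconst v"
  have uX: "deg_le (opmul D ?u X) N"
    using deg_le_opmul[OF deg_le_opconst X] by simp
  have "gauge v u (gauge u v X) = opmul D (opmul D (opmul D ?v (opmul D ?u X)) ?v) ?u"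
    unfolding gauge_def by (simp add: opmul_assoc[OF deg_le_opconst uX deg_le_opconst])
  also have "opmul D ?v (opmul D ?u X) = X"
    by (rule opmul_opconst_cancel[OF vu X])
  also have "opmul D (opmul D X ?v) ?u = X"
    by (simp add: opmul_assoc[OF X deg_le_opconst deg_le_opconst] opmul_opconst_opconst vu
        opmul_opconst_1_right[OF X])
  finally show ?thesis .
qed

lemma gauge_oppow:
  assumes uv: "u * v = 1" and vu: "v * u = 1" and X: "deg_le X N"
  shows "gauge u v (oppow D X k) = oppow D (gauge u v X) k"
  by (induction k) (simp_all add: gauge_opconst uv gauge_opmul[OF vu X deg_le_oppow[OF X]])

lemma gauge_normop: "gauge g f (normop n a) = normop n (gauge_coeffs D a f g)"
proof
  fix m
  define t where "t j = of_nat (n - m choose j) * g * a j * (D ^^ (n - m - j)) f" for j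
  have "gauge g f (normop n a) m
      = (\<Sum>i\<le>n. g * normop n a i * (if m \<le> i then of_nat (i choose m) * (D ^^ (i - m)) f else 0))"
    by (rule gauge_eq_sum[OF deg_le_normop])
  also have "\<dots> = (\<Sum>j\<le>n. g * normop n a (n - j)
      * (if m \<le> n - j then of_nat (n - j choose m) * (D ^^ (n - j - m)) f else 0))"
    by (rule sum.reindex_bij_witness[where i="\<lambda>j. n - j" and j="\<lambda>j. n - j"]) auto
  also have "\<dots> = (\<Sum>j\<le>n. if m + j \<le> n then of_nat (n choose (n - m)) * t j else 0)"
  proof (rule sum.cong[OF refl])
    fix j
    assume j: "j \<in> {..n}"
    show "g * normop n a (n - j)
        * (if m \<le> n - j then of_nat (n - j choose m) * (D ^^ (n - j - m)) f else 0)
      = (if m + j \<le> n then of_nat (n choose (n - m)) * t j else 0)"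
    proof (cases "m + j \<le> n")
      case True
      then have "m \<le> n - j" and "n - j - m = n - m - j" and "n - (n - j) = j"
        by arith+
      with True have "g * normop n a (n - j)
          * (if m \<le> n - j then of_nat (n - j choose m) * (D ^^ (n - j - m)) f else 0)
        = g * (of_nat (n choose j) * a j) * (of_nat (n - j choose m) * (D ^^ (n - m - j)) f)"
        by (simp add: normop_def)
      also have "\<dots> = of_nat ((n choose j) * (n - j choose m)) * (g * a j * (D ^^ (n - m - j)) f)"
        by (rule mult_of_nat_mult_of_nat)
      also have "\<dots> = of_nat (n choose (n - m)) * t j"
        using True by (simp add: choose_mult_choose_diff t_def mult.assoc)
      finally show ?thesis
        using True by simp
    qed (use j in auto)
  qed
  also have "\<dots> = normop n (gauge_coeffs D a f g) m"
  proof (cases "m \<le> n")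
    case True
    then have "(\<Sum>j\<le>n. if m + j \<le> n then of_nat (n choose (n - m)) * t j else 0)
      = (\<Sum>j\<le>n - m. of_nat (n choose (n - m)) * t j)"
      by (intro sum.mono_neutral_cong_right) auto
    then show ?thesis
      using True by (simp add: normop_def gauge_coeffs_def t_def sum_distrib_left)
  qed (simp add: normop_def)
  finally show "gauge g f (normop n a) m = normop n (gauge_coeffs D a f g) m" .
qed

lemma gauge_nabla:
  assumes "a 0 = 1" and "g * f = 1"
  shows "gauge g f (nabla a) = nabla (gauge_coeffs D a f g)"
proof
  fix m
  have "gauge g f (nabla a) m
      = g * nabla a 0 * (if m = 0 then f else 0)
      + g * nabla a 1 * (if m \<le> 1 then of_nat (1 choose m) * (D ^^ (1 - m)) f else 0)"
    by (simp add: gauge_eq_sum[OF deg_le_nabla] numeral_2_eq_2)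
  moreover have "gauge_coeffs D a f g 1 = g * D f + g * a 1 * f"
    using assms(1) by (simp add: gauge_coeffs_def numeral_2_eq_2)
  ultimately show "gauge g f (nabla a) m = nabla (gauge_coeffs D a f g) m"
    using assms(2)
    by (cases m) (auto simp: nabla_def opadd_def opD_def opconst_def distrib_left add.commute)
qed

lemma gw_decomp_gauge:
  assumes uv: "u * v = 1" and vu: "v * u = 1"
    and normop: "normop n b' = gauge u v (normop n b)" and nabla: "nabla b' = gauge u v (nabla b)"
    and decomp: "gw_decomp D n b I"
  shows "gw_decomp D n b' (\<lambda>k. u * I k * v)"
proof -
  let ?P = "oppow D (nabla b)"
  let ?c = "\<lambda>k. of_nat (n choose k) * I k"
  have P: "deg_le (?P k) n" if "k \<le> n" for k
    using deg_le_mono[OF deg_le_oppow[OF deg_le_nabla[of b], of k]] that by auto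
  have cP: "deg_le (opmul D (opconst (?c k)) (?P (n - k))) n" for k
    using deg_le_opmul[OF deg_le_opconst P[of "n - k"]] by simp
  have c: "u * ?c k * v = of_nat (n choose k) * (u * I k * v)" for k
    by (metis mult.assoc mult_of_nat_commute)
  have "normop n b' = gauge u v (\<lambda>j. ?P n j + (\<Sum>k\<in>{2..n}. opmul D (opconst (?c k)) (?P (n - k)) j))"
    using decomp normop by (simp add: gw_decomp_def)
  also have "\<dots> = (\<lambda>j. gauge u v (?P n) j
      + (\<Sum>k\<in>{2..n}. gauge u v (opmul D (opconst (?c k)) (?P (n - k))) j))"
    by (rule gauge_add_sum[OF P[OF le_refl]]) (simp_all add: cP)
  also have "\<dots> = (\<lambda>j. oppow D (nabla b') n j
      + (\<Sum>k\<in>{2..n}. opmul D (opconst (of_nat (n choose k) * (u * I k * v)))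
          (oppow D (nabla b') (n - k)) j))"
    by (simp add: nabla gauge_oppow[OF uv vu deg_le_nabla] gauge_opmul[OF vu deg_le_opconst P]
        gauge_opconst c)
  finally show ?thesis
    by (simp add: gw_decomp_def)
qed

lemma gw_welldef_gauge:
  assumes uv: "u * v = 1" and vu: "v * u = 1"
    and normop: "normop n b' = gauge u v (normop n b)" and nabla: "nabla b' = gauge u v (nabla b)"
    and welldef: "gw_welldef D n b"
  shows "gw_welldef D n b'"
proof -
  have normop': "normop n b = gauge v u (normop n b')"
    by (simp add: normop gauge_gauge[OF vu deg_le_normop])
  have nabla': "nabla b = gauge v u (nabla b')"
    by (simp add: nabla gauge_gauge[OF vu deg_le_nabla])
  obtain I where "gw_decomp D n b I"
    using welldef by (auto simp: gw_welldef_def)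
  then have "gw_decomp D n b' (\<lambda>k. u * I k * v)"
    by (rule gw_decomp_gauge[OF uv vu normop nabla])
  moreover have "J k = J' k" if "gw_decomp D n b' J" and "gw_decomp D n b' J'" and "k \<in> {2..n}"
    for J J' k
  proof -
    have "v * J k * u = v * J' k * u"
      using gw_decomp_gauge[OF vu uv normop' nabla' that(1)]
        gw_decomp_gauge[OF vu uv normop' nabla' that(2)] welldef that(3) unfolding gw_welldef_def by blast
    then have "u * (v * J k * u) * v = u * (v * J' k * u) * v"
      by simp
    then show ?thesis
      by (metis mult.assoc mult_1_left mult_1_right uv)
  qed
  ultimately show ?thesis
    unfolding gw_welldef_def by blast
qed

end

lemma gwI_eq:
  assumes "gw_welldef D n b" and "gw_decomp D n b I" and "k \<in> {2..n}"
  shows "gwI D n b k = I k"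
  unfolding gwI_def
proof (rule the_equality)
  show "\<exists>J. gw_decomp D n b J \<and> J k = I k"
    using assms(2) by blast
next
  fix c
  assume "\<exists>J. gw_decomp D n b J \<and> J k = c"
  then show "c = I k"
    using assms unfolding gw_welldef_def by blast
qed

theorem mainTheorem2:
  fixes D :: "'a::ring_1 \<Rightarrow> 'a" and n :: nat and a :: "nat \<Rightarrow> 'a" and f g :: 'a
  assumes "diffring D"
    and "n \<ge> 2"
    and "a 0 = 1"
    and "f * g = 1" and "g * f = 1"
    and "gw_welldef D n a"
  shows "gauge_coeffs D a f g 0 = 1
    \<and> normop n (gauge_coeffs D a f g) = opmul D (opmul D (opconst g) (normop n a)) (opconst f)
    \<and> (\<forall>k\<in>{2..n}. gwI D n (gauge_coeffs D a f g) k = g * gwI D n a k * f)"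
proof -
  interpret differential_ring D
    by (rule differential_ring.intro) (fact assms(1))
  define a' where "a' = gauge_coeffs D a f g"
  have normop: "normop n a' = gauge g f (normop n a)"
    by (simp add: a'_def gauge_normop)
  have nabla: "nabla a' = gauge g f (nabla a)"
    using gauge_nabla[of a g f, OF assms(3,5)] by (simp add: a'_def)
  obtain I where I: "gw_decomp D n a I"
    using assms(6) by (auto simp: gw_welldef_def)
  have I': "gw_decomp D n a' (\<lambda>k. g * I k * f)"
    by (rule gw_decomp_gauge[OF assms(5,4) normop nabla I])
  have welldef': "gw_welldef D n a'"
    by (rule gw_welldef_gauge[OF assms(5,4) normop nabla assms(6)])
  have "gwI D n a' k = g * gwI D n a k * f" if "k \<in> {2..n}" for k
    using gwI_eq[OF welldef' I' that] gwI_eq[OF assms(6) I that] by simp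
  moreover have "a' 0 = 1"
    by (simp add: a'_def gauge_coeffs_def assms(3,5))
  ultimately show ?thesis
    using normop unfolding gauge_def a'_def by blast
qed

end
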